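(* Let $q\in(0,1]$, $\eta\in(0,1]$ and $m>0$. Suppose that $\sup_{T\in\mathbb T}E[|\hat u_T|^m]<\infty$ where $\hat u_T=a_T^{-1}(\hat\theta_T-\theta^* )$, and assume [A5]: there exists $\lambda>0$ with $\lim_{x\to0}p(x)/|x|^q=\lambda$. Then for every $R>0$ and $m_0>0$ there exists a constant $D_{m,m_0,R}>0$ such that $$P\bigl(\hat\theta_T^{(0)}\ne0\bigr)<D_{m,m_0,R}\bigl(\|a_T\|^{m\eta}+c_T(m_0,R)\bigr)$$ for every $T\in\mathbb T$.
   Context: Let $\Theta\subset\mathbb R^{\mathsf p}$ be a bounded open set with closure $\overline\Theta$ and $\theta^*\in\Theta$. Let $(\Omega,\mathcal F,P)$ be a probability space, $\mathbb T\subset\mathbb R_{\ge0}$ with $\sup\mathbb T=\infty$. For each $T\in\mathbb T$, $\mathbb H_T:\Omega\times\overline\Theta\to\mathbb R$ is a random field continuous in $\theta$ for every $\omega$. The penalty is $p_T(\theta)=\sum_{j=1}^{\mathsf p}\xi_T^jp(\theta_j)$ with (possibly random) $\xi_T^j>0$ and $p:\mathbb R\to\mathbb R_{\ge0}$, $p(0)=0$; $\mathbb H^\dagger_T=\mathbb H_T-p_T$, and $\hat\theta_T:\Omega\to\overline\Theta$ is measurable with $\mathbb H^\dagger_T(\hat\theta_T)=\max_{\overline\Theta}\mathbb H^\dagger_T$. $\mathcal J^{(0)}=\{j:\theta^*_j=0\}$, $\mathcal J^{(1)}=\{j:\theta^*_j\ne0\}$; $x^{(0)}=(x_j)_{j\in\mathcal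 J^{(0)}}$, $A^{(00)}=(A_{ij})_{i,j\in\mathcal J^{(0)}}$. $a_T=\mathrm{diag}(\alpha_T^1,\dots,\alpha_T^{\mathsf p})$ is deterministic, invertible, with $\|a_T\|\to0$ ($\|\cdot\|$ spectral norm); $\mathbb U_T=\{u:\theta^*+a_Tu\in\overline\Theta\}$. $\tilde a_T$ is diagonal with $(\tilde a_T)_{jj}=(\xi_T^j)^{-1/q}$ for $j\in\mathcal J^{(0)}$ and $\alpha_T^j$ for $j\in\mathcal J^{(1)}$; $G_T=a_T^{-1}\tilde a_T$. For $R>0$ let $\mathsf c_{T,R}=\sup\frac{|\mathbb H_T(\theta^*+a_Tu)-\mathbb H_T(\theta^*+a_Tv)|}{|u-v|^q}$, the supremum over $u,v\in\mathbb U_T$ with $u\ne v$ and $|a_Tu|,|a_Tv|<R\|a_T\|^{1-\eta}$, and for $m_0>0$ let $c_T(m_0,R)=E[|\mathsf c_{T,R}|^{m_0}\|G_T^{(00)}\|^{qm_0}]$ (set to $\infty$ if infinite). *)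

theory Defs
  imports "HOL-Probability.Probability"
begin

definition diagm :: "('p::finite \<Rightarrow> real) \<Rightarrow> real^'p \<Rightarrow> real^'p" where
  "diagm d u = (\<chi> j. d j * u $ j)"

definition dnorm :: "('p::finite \<Rightarrow> real) \<Rightarrow> real" where
  "dnorm d = onorm (diagm d)"

definition ennpow :: "ennreal \<Rightarrow> real \<Rightarrow> ennreal" where
  "ennpow x r = (if x = \<infinity> then \<infinity> else ennreal (enn2real x powr r))"

text \<open>The random Hoelder-type constant c_{T,R}(omega), valued in [0,\<infinity>]
  (H is the random field at fixed T and omega, alpha the diagonal of a_T).\<close>
definition cTR :: "(real^'p::finite \<Rightarrow> real) \<Rightarrow> (real^'p) set \<Rightarrow> real^'p \<Rightarrow> ('p \<Rightarrow> real)
    \<Rightarrow> real \<Rightarrow> real \<Rightarrow> real \<Rightarrow> ennreal" where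
  "cTR H Th ths alpha q eta R =
     (SUP uv \<in> {(u, v). u \<noteq> v \<and> ths + diagm alpha u \<in> closure Th \<and> ths + diagm alpha v \<in> closure Th
                 \<and> norm (diagm alpha u) < R * dnorm alpha powr (1 - eta)
                 \<and> norm (diagm alpha v) < R * dnorm alpha powr (1 - eta)}.
        ennreal (\<bar>H (ths + diagm alpha (fst uv)) - H (ths + diagm alpha (snd uv))\<bar>
                 / norm (fst uv - snd uv) powr q))"

text \<open>Spectral norm of the principal submatrix G_T^{(00)} of G_T = a_T^{-1} tilde a_T
  (indices j with ths_j = 0); realised as the operator norm of that block padded by zeros.\<close>
definition G00norm :: "real^'p::finite \<Rightarrow> ('p \<Rightarrow> real) \<Rightarrow> ('p \<Rightarrow> real) \<Rightarrow> real \<Rightarrow> real" where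
  "G00norm ths alpha xi q =
     dnorm (\<lambda>j. if ths $ j = 0 then xi j powr (- 1 / q) / alpha j else 0)"

definition cT :: "'w measure \<Rightarrow> ('w \<Rightarrow> real^'p::finite \<Rightarrow> real) \<Rightarrow> (real^'p) set \<Rightarrow> real^'p
    \<Rightarrow> ('p \<Rightarrow> real) \<Rightarrow> ('w \<Rightarrow> 'p \<Rightarrow> real) \<Rightarrow> real \<Rightarrow> real \<Rightarrow> real \<Rightarrow> real \<Rightarrow> ennreal" where
  "cT M H Th ths alpha xi q eta m0 R =
     (\<integral>\<^sup>+ \<omega>. ennpow (cTR (H \<omega>) Th ths alpha q eta R) m0
              * ennreal (G00norm ths alpha (xi \<omega>) q powr (q * m0)) \<partial>M)"

end

theory Submission
  imports Defs
begin

(* Suppose some coordinate j with ths_j = 0 is estimated as nonzero while thetahat is close to ths.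
   Setting that coordinate to zero stays in the closure of Th, and by maximality of thetahat it
   lowers H by at least xi_j p(thetahat_j) >= (lam/2) xi_j |thetahat_j|^q, by [A5]. In the rescaled
   coordinates u = a_T^-1 (theta - ths) this move has length |thetahat_j| / |alpha_j|, so
   c_{T,R} >= (lam/2) xi_j |alpha_j|^q, while ||G_T^(00)||^q >= 1 / (xi_j |alpha_j|^q). Hence
   c_{T,R}^m0 ||G_T^(00)||^(q m0) >= (lam/2)^m0 on this event, and Markov's inequality bounds its
   probability by c_T(m0,R) / (lam/2)^m0.
   If instead thetahat is at distance at least min(eps, R ||a_T||^(1-eta)) from ths, then the
   rescaled error |u_hat| is at least this distance divided by ||a_T||, and Markov's inequality for
   |u_hat|^m bounds the probability by a multiple of ||a_T||^(m eta). *)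

lemma bounded_linear_diagm: "bounded_linear (diagm d)"
proof -
  have "linear (diagm d)" by (simp add: linear_iff diagm_def vec_eq_iff algebra_simps)
  then show ?thesis using linear_conv_bounded_linear by blast
qed

lemma norm_diagm_le: "norm (diagm d u) \<le> dnorm d * norm u"
  unfolding dnorm_def by (rule onorm[OF bounded_linear_diagm])

lemma abs_le_dnorm: "\<bar>d j\<bar> \<le> dnorm d"
proof -
  have "diagm d (axis j 1) = d j *\<^sub>R axis j 1"
    by (simp add: diagm_def axis_def vec_eq_iff)
  then show ?thesis using norm_diagm_le[of d "axis j 1"] by simp
qed

lemma dnorm_pos: "d j \<noteq> 0 \<Longrightarrow> dnorm d > 0"
  using abs_le_dnorm[of d j] by linarith

lemma lower_bound_near_0_of_tendsto_div_powr:
  fixes p :: "real \<Rightarrow> real"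
  assumes "((\<lambda>x. p x / \<bar>x\<bar> powr q) \<longlongrightarrow> lam) (at 0)" and "\<kappa> < lam"
  shows "\<exists>\<delta>>0. \<forall>x. x \<noteq> 0 \<longrightarrow> \<bar>x\<bar> < \<delta> \<longrightarrow> \<kappa> * \<bar>x\<bar> powr q \<le> p x"
proof -
  have "eventually (\<lambda>x. \<kappa> < p x / \<bar>x\<bar> powr q) (at 0)"
    using order_tendstoD(1)[OF assms] .
  then obtain \<delta> where "\<delta> > 0" and \<delta>: "\<And>x. x \<noteq> 0 \<Longrightarrow> \<bar>x\<bar> < \<delta> \<Longrightarrow> \<kappa> < p x / \<bar>x\<bar> powr q"
    unfolding eventually_at by auto
  have "\<kappa> * \<bar>x\<bar> powr q \<le> p x" if "x \<noteq> 0" "\<bar>x\<bar> < \<delta>" for x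
    using \<delta>[OF that] that(1) by (simp add: pos_less_divide_eq)
  then show ?thesis using \<open>\<delta> > 0\<close> by blast
qed

lemma penalty_le_increment_of_zeroing:
  fixes Hc :: "real^'p::finite \<Rightarrow> real"
  assumes max: "\<forall>\<theta>\<in>S. Hc \<theta> - (\<Sum>j\<in>UNIV. xi j * p (\<theta> $ j)) \<le> Hc th - (\<Sum>j\<in>UNIV. xi j * p (th $ j))"
    and zeroed: "(\<chi> j. if j = j0 then 0 else th $ j) \<in> S" and "p 0 = 0"
  shows "xi j0 * p (th $ j0) \<le> Hc th - Hc (\<chi> j. if j = j0 then 0 else th $ j)"
proof -
  let ?tt = "\<chi> j. if j = j0 then 0 else th $ j"
  have "(\<Sum>j\<in>UNIV. xi j * p (th $ j)) - (\<Sum>j\<in>UNIV. xi j * p (?tt $ j))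
      = (\<Sum>j\<in>UNIV. if j = j0 then xi j0 * p (th $ j0) else 0)"
    unfolding sum_subtractf[symmetric] by (rule sum.cong) (auto simp: \<open>p 0 = 0\<close>)
  then show ?thesis using max zeroed by force
qed

lemma G00norm_powr_ge:
  assumes "ths $ j0 = 0" "xi j0 > 0" "alpha j0 \<noteq> 0" "q > 0"
  shows "1 / (xi j0 * \<bar>alpha j0\<bar> powr q) \<le> G00norm ths alpha xi q powr q"
proof -
  have "\<bar>xi j0 powr (- 1 / q) / alpha j0\<bar> \<le> G00norm ths alpha xi q"
    using abs_le_dnorm[of "\<lambda>j. if ths $ j = 0 then xi j powr (- 1 / q) / alpha j else 0" j0]
    by (simp add: G00norm_def assms(1))
  then have "\<bar>xi j0 powr (- 1 / q) / alpha j0\<bar> powr q \<le> G00norm ths alpha xi q powr q"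
    using assms(4) by (intro powr_mono2) auto
  moreover have "\<bar>xi j0 powr (- 1 / q) / alpha j0\<bar> powr q = (xi j0 powr (- 1 / q)) powr q / \<bar>alpha j0\<bar> powr q"
    using assms(2,3) by (simp add: abs_divide powr_divide)
  moreover have "(xi j0 powr (- 1 / q)) powr q = xi j0 powr (- 1)"
    using assms(4) by (simp add: powr_powr)
  moreover have "xi j0 powr (- 1) = 1 / xi j0"
    using assms(2) by (simp add: powr_minus divide_inverse)
  ultimately show ?thesis by simp
qed

lemma ennpow_mult_powr_ge:
  assumes "ennreal \<rho> \<le> c" "\<kappa> \<le> \<rho> * g powr q" "\<kappa> > 0" "g > 0" "m0 > 0"
  shows "ennreal (\<kappa> powr m0) \<le> ennpow c m0 * ennreal (g powr (q * m0))"
proof (cases "c = \<infinity>")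
  case True
  then show ?thesis using assms(4) by (simp add: ennpow_def ennreal_mult_top)
next
  case False
  then obtain c' where c': "c = ennreal c'" "c' \<ge> 0" by (cases c) auto
  have "\<rho> \<le> c'" using assms(1-4) c' by (smt (verit) ennreal_le_iff zero_less_mult_iff powr_gt_zero)
  then have "\<kappa> \<le> c' * g powr q" using assms(2,4) by (smt (verit) mult_right_mono powr_ge_zero)
  then have "\<kappa> powr m0 \<le> (c' * g powr q) powr m0" using assms(3,5) by (intro powr_mono2) auto
  also have "\<dots> = c' powr m0 * g powr (q * m0)" using c' assms(4) by (simp add: powr_mult powr_powr)
  finally show ?thesis using c' assms(4) by (simp add: ennpow_def ennreal_mult[symmetric])
qed

lemma cTR_ge_of_support_error:
  fixes Hc :: "real^'p::finite \<Rightarrow> real" and th ths :: "real^'p"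
  assumes ball: "ball ths \<rho> \<subseteq> closure Th"
    and xi: "\<forall>j. xi j > 0" and alpha: "\<forall>j. alpha j \<noteq> 0"
    and th: "th \<in> closure Th"
    and max: "\<forall>\<theta>\<in>closure Th. Hc \<theta> - (\<Sum>j\<in>UNIV. xi j * p (\<theta> $ j))
        \<le> Hc th - (\<Sum>j\<in>UNIV. xi j * p (th $ j))"
    and "p 0 = 0"
    and p_ge: "\<forall>x. x \<noteq> 0 \<longrightarrow> \<bar>x\<bar> < \<delta> \<longrightarrow> \<kappa> * \<bar>x\<bar> powr q \<le> p x"
    and near: "norm (th - ths) < \<rho>" "norm (th - ths) < \<delta>"
      "norm (th - ths) < R * dnorm alpha powr (1 - eta)"
    and j0: "ths $ j0 = 0" "th $ j0 \<noteq> 0"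
  shows "ennreal (\<kappa> * xi j0 * \<bar>alpha j0\<bar> powr q) \<le> cTR Hc Th ths alpha q eta R"
proof -
  define t where "t = th $ j0"
  define tt where "tt = (\<chi> j. if j = j0 then 0 else th $ j)"
  define u where "u = (\<chi> j. (th $ j - ths $ j) / alpha j)"
  define v where "v = (\<chi> j. (tt $ j - ths $ j) / alpha j)"
  have diagm_u: "diagm alpha u = th - ths" and diagm_v: "diagm alpha v = tt - ths"
    using alpha by (simp_all add: diagm_def u_def v_def vec_eq_iff)
  have "norm (tt - ths) \<le> norm (th - ths)"
    by (rule norm_le_componentwise_cart) (auto simp: tt_def j0)
  then have tt: "tt \<in> closure Th" "norm (tt - ths) < R * dnorm alpha powr (1 - eta)"
    using ball near by (auto simp: dist_norm norm_minus_commute)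
  have "u - v = (t / alpha j0) *\<^sub>R axis j0 1"
    by (simp add: u_def v_def tt_def t_def vec_eq_iff axis_def j0)
  then have norm_uv: "norm (u - v) = \<bar>t\<bar> / \<bar>alpha j0\<bar>"
    by (simp add: abs_divide)
  have t0: "\<bar>t\<bar> > 0" and a0: "\<bar>alpha j0\<bar> > 0"
    using j0 alpha by (auto simp: t_def)
  have "\<bar>t\<bar> < \<delta>"
    using near(2) component_le_norm_cart[of "th - ths" j0] by (simp add: t_def j0)
  then have "xi j0 * (\<kappa> * \<bar>t\<bar> powr q) \<le> \<bar>Hc th - Hc tt\<bar>"
    using penalty_le_increment_of_zeroing[OF max tt(1)[unfolded tt_def] \<open>p 0 = 0\<close>] p_ge j0 xi
    unfolding tt_def t_def by (smt (verit) mult_left_mono)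
  then have "ennreal (\<kappa> * xi j0 * \<bar>alpha j0\<bar> powr q)
      \<le> ennreal (\<bar>Hc th - Hc tt\<bar> / norm (u - v) powr q)"
    unfolding norm_uv using t0 a0 by (intro ennreal_leI) (simp add: powr_divide pos_le_divide_eq field_simps)
  also have "\<dots> \<le> cTR Hc Th ths alpha q eta R"
    unfolding cTR_def
    by (rule SUP_upper2[of "(u, v)"]) (use diagm_u diagm_v th tt near t0 a0 norm_uv in auto)
  finally show ?thesis .
qed

lemma cTR_G00norm_ge:
  fixes Hc :: "real^'p::finite \<Rightarrow> real" and th ths :: "real^'p"
  assumes ball: "ball ths \<rho> \<subseteq> closure Th"
    and xi: "\<forall>j. xi j > 0" and alpha: "\<forall>j. alpha j \<noteq> 0"
    and th: "th \<in> closure Th"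
    and max: "\<forall>\<theta>\<in>closure Th. Hc \<theta> - (\<Sum>j\<in>UNIV. xi j * p (\<theta> $ j))
        \<le> Hc th - (\<Sum>j\<in>UNIV. xi j * p (th $ j))"
    and "p 0 = 0"
    and p_ge: "\<forall>x. x \<noteq> 0 \<longrightarrow> \<bar>x\<bar> < \<delta> \<longrightarrow> \<kappa> * \<bar>x\<bar> powr q \<le> p x"
    and "\<kappa> > 0" "q > 0" "m0 > 0"
    and near: "norm (th - ths) < \<rho>" "norm (th - ths) < \<delta>"
      "norm (th - ths) < R * dnorm alpha powr (1 - eta)"
    and j0: "ths $ j0 = 0" "th $ j0 \<noteq> 0"
  shows "ennreal (\<kappa> powr m0) \<le> ennpow (cTR Hc Th ths alpha q eta R) m0
           * ennreal (G00norm ths alpha xi q powr (q * m0))"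
proof (rule ennpow_mult_powr_ge)
  show "ennreal (\<kappa> * xi j0 * \<bar>alpha j0\<bar> powr q) \<le> cTR Hc Th ths alpha q eta R"
    using cTR_ge_of_support_error[OF ball xi alpha th max \<open>p 0 = 0\<close> p_ge near j0] .
  have "xi j0 > 0" "\<bar>alpha j0\<bar> > 0" using xi alpha by auto
  then have "\<kappa> * xi j0 * \<bar>alpha j0\<bar> powr q * (1 / (xi j0 * \<bar>alpha j0\<bar> powr q))
      \<le> \<kappa> * xi j0 * \<bar>alpha j0\<bar> powr q * G00norm ths alpha xi q powr q"
    using G00norm_powr_ge[OF j0(1)] \<open>\<kappa> > 0\<close> \<open>q > 0\<close> by (intro mult_left_mono) auto
  then show "\<kappa> \<le> \<kappa> * xi j0 * \<bar>alpha j0\<bar> powr q * G00norm ths alpha xi q powr q"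
    using \<open>xi j0 > 0\<close> \<open>\<bar>alpha j0\<bar> > 0\<close> by simp
  show "G00norm ths alpha xi q > 0"
    unfolding G00norm_def using j0 \<open>xi j0 > 0\<close> \<open>\<bar>alpha j0\<bar> > 0\<close> by (intro dnorm_pos[of _ j0]) auto
qed (use \<open>\<kappa> > 0\<close> \<open>m0 > 0\<close> in auto)

(* a is the spectral norm of a_T, d the distance of the estimator from ths and n the norm of the
   rescaled error. *)
lemma one_le_powr_of_far_distance:
  fixes a n d R e0 eta m :: real
  assumes a: "0 < a" "a \<le> 1" and "n \<ge> 0" and d: "d \<le> a * n"
    and far: "min e0 (R * a powr (1 - eta)) \<le> d"
    and eta: "0 < eta" "eta \<le> 1" and "m > 0" "R > 0" "e0 > 0"
  shows "1 \<le> ((1 / R) powr m + (1 / e0) powr m) * a powr (m * eta) * n powr m"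
proof -
  have "1 \<le> (1 / e0) powr m * a powr (m * eta) * n powr m
      \<or> 1 \<le> (1 / R) powr m * a powr (m * eta) * n powr m"
  proof (cases "e0 \<le> d")
    case True
    then have "e0 powr m \<le> (a * n) powr m" using d assms by (intro powr_mono2) auto
    also have "\<dots> = a powr m * n powr m" using a \<open>n \<ge> 0\<close> by (simp add: powr_mult)
    also have "\<dots> \<le> a powr (m * eta) * n powr m"
      using a eta \<open>m > 0\<close> by (intro mult_right_mono powr_mono') (auto simp: mult_left_le)
    finally show ?thesis using \<open>e0 > 0\<close> by (simp add: powr_divide field_simps)
  next
    case False
    then have "R * a powr (1 - eta) \<le> a * n" using d far by linarith
    then have "R * a \<le> a * n * a powr eta" using a by (simp add: powr_diff divide_le_eq)
    then have "R \<le> n * a powr eta" using a by (simp add: algebra_simps)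
    then have "R powr m \<le> (n * a powr eta) powr m" using assms by (intro powr_mono2) auto
    also have "\<dots> = a powr (m * eta) * n powr m" using a \<open>n \<ge> 0\<close>
      by (simp add: powr_mult powr_powr algebra_simps)
    finally show ?thesis using \<open>R > 0\<close> by (simp add: powr_divide field_simps)
  qed
  moreover have "0 \<le> (1 / R) powr m * a powr (m * eta) * n powr m"
    "0 \<le> (1 / e0) powr m * a powr (m * eta) * n powr m" by simp_all
  ultimately show ?thesis by (simp only: distrib_right) linarith
qed

lemma emeasure_mult_le_nn_integral:
  assumes "A \<in> sets M" and "\<And>\<omega>. \<omega> \<in> A \<Longrightarrow> c \<le> f \<omega>"
  shows "c * emeasure M A \<le> (\<integral>\<^sup>+\<omega>. f \<omega> \<partial>M)"
proof -
  have "c * emeasure M A = (\<integral>\<^sup>+\<omega>. c * indicator A \<omega> \<partial>M)"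
    by (rule nn_integral_cmult_indicator[symmetric, OF assms(1)])
  also have "\<dots> \<le> (\<integral>\<^sup>+\<omega>. f \<omega> \<partial>M)"
    by (intro nn_integral_mono) (auto simp: indicator_def assms(2))
  finally show ?thesis .
qed

(* The setting at a fixed T: H, xi, thetahat and alpha stand for H_T, xi_T, thetahat_T and the
   diagonal of a_T. *)
locale penalized_estimator = prob_space M for M :: "'w measure" +
  fixes Th :: "(real^'p::finite) set" and ths :: "real^'p"
    and H :: "'w \<Rightarrow> real^'p \<Rightarrow> real" and xi :: "'w \<Rightarrow> 'p \<Rightarrow> real" and p :: "real \<Rightarrow> real"
    and thetahat :: "'w \<Rightarrow> real^'p" and alpha :: "'p \<Rightarrow> real"
  assumes xi_pos: "\<omega> \<in> space M \<Longrightarrow> xi \<omega> j > 0"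
    and alpha_nonzero: "alpha j \<noteq> 0"
    and p_0: "p 0 = 0"
    and thetahat_measurable [measurable]: "thetahat \<in> borel_measurable M"
    and thetahat_in: "\<omega> \<in> space M \<Longrightarrow> thetahat \<omega> \<in> closure Th"
    and thetahat_max: "\<omega> \<in> space M \<Longrightarrow> \<theta> \<in> closure Th \<Longrightarrow>
      H \<omega> \<theta> - (\<Sum>j\<in>UNIV. xi \<omega> j * p (\<theta> $ j))
        \<le> H \<omega> (thetahat \<omega>) - (\<Sum>j\<in>UNIV. xi \<omega> j * p (thetahat \<omega> $ j))"
begin

lemma emeasure_near_support_error_le:
  assumes "ball ths \<epsilon> \<subseteq> closure Th" "\<epsilon> \<le> \<delta>" "\<epsilon> \<le> R * dnorm alpha powr (1 - eta)"
    and p_ge: "\<forall>x. x \<noteq> 0 \<longrightarrow> \<bar>x\<bar> < \<delta> \<longrightarrow> \<kappa> * \<bar>x\<bar> powr q \<le> p x"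
    and "\<kappa> > 0" "q > 0" "m0 > 0"
  shows "ennreal (\<kappa> powr m0) * emeasure M {\<omega>\<in>space M. (\<exists>j. ths $ j = 0 \<and> thetahat \<omega> $ j \<noteq> 0)
      \<and> norm (thetahat \<omega> - ths) < \<epsilon>} \<le> cT M H Th ths alpha xi q eta m0 R"
  unfolding cT_def
proof (rule emeasure_mult_le_nn_integral)
  fix \<omega> assume \<omega>: "\<omega> \<in> {\<omega>\<in>space M. (\<exists>j. ths $ j = 0 \<and> thetahat \<omega> $ j \<noteq> 0)
      \<and> norm (thetahat \<omega> - ths) < \<epsilon>}"
  then obtain j0 where "ths $ j0 = 0" "thetahat \<omega> $ j0 \<noteq> 0" by blast
  with \<omega> assms show "ennreal (\<kappa> powr m0) \<le> ennpow (cTR (H \<omega>) Th ths alpha q eta R) m0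
      * ennreal (G00norm ths alpha (xi \<omega>) q powr (q * m0))"
    by (intro cTR_G00norm_ge[of ths \<epsilon> Th "xi \<omega>" alpha "thetahat \<omega>" "H \<omega>" p \<delta> \<kappa> q])
      (auto simp: xi_pos alpha_nonzero p_0 thetahat_in thetahat_max)
qed measurable

lemma prob_far_le:
  assumes "dnorm alpha \<le> 1" and "0 < eta" "eta \<le> 1" "m > 0" "R > 0" "e0 > 0" "S \<ge> 0"
    and moment: "(\<integral>\<^sup>+\<omega>. ennreal (norm (\<chi> j. (thetahat \<omega> $ j - ths $ j) / alpha j) powr m) \<partial>M)
      \<le> ennreal S"
  shows "measure M {\<omega>\<in>space M. min e0 (R * dnorm alpha powr (1 - eta)) \<le> norm (thetahat \<omega> - ths)}
    \<le> S * ((1 / R) powr m + (1 / e0) powr m) * dnorm alpha powr (m * eta)"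
proof -
  define K where "K = ((1 / R) powr m + (1 / e0) powr m) * dnorm alpha powr (m * eta)"
  have "dnorm alpha > 0" using dnorm_pos alpha_nonzero by blast
  then have "K > 0" using assms by (simp add: K_def add_pos_pos)
  let ?F = "{\<omega>\<in>space M. min e0 (R * dnorm alpha powr (1 - eta)) \<le> norm (thetahat \<omega> - ths)}"
  have "ennreal (1 / K) * emeasure M ?F
      \<le> (\<integral>\<^sup>+\<omega>. ennreal (norm (\<chi> j. (thetahat \<omega> $ j - ths $ j) / alpha j) powr m) \<partial>M)"
  proof (rule emeasure_mult_le_nn_integral)
    fix \<omega> assume \<omega>: "\<omega> \<in> ?F"
    define u where "u = (\<chi> j. (thetahat \<omega> $ j - ths $ j) / alpha j)"
    have "thetahat \<omega> - ths = diagm alpha u"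
      by (simp add: diagm_def u_def vec_eq_iff alpha_nonzero)
    then have "norm (thetahat \<omega> - ths) \<le> dnorm alpha * norm u"
      using norm_diagm_le by metis
    then have "1 \<le> K * norm u powr m"
      unfolding K_def using \<omega> assms \<open>dnorm alpha > 0\<close>
      by (intro one_le_powr_of_far_distance[where d = "norm (thetahat \<omega> - ths)"]) auto
    then show "ennreal (1 / K) \<le> ennreal (norm u powr m)"
      using \<open>K > 0\<close> by (intro ennreal_leI) (simp add: divide_le_eq mult.commute)
  qed measurable
  moreover have "ennreal (1 / K) * emeasure M ?F = ennreal (1 / K * measure M ?F)"
    using \<open>K > 0\<close> by (subst ennreal_mult) (auto simp: emeasure_eq_measure)
  ultimately have "ennreal (1 / K * measure M ?F) \<le> ennreal S"
    using moment by simp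
  then show ?thesis
    using \<open>K > 0\<close> \<open>S \<ge> 0\<close> by (simp add: K_def divide_le_eq mult.commute mult.left_commute)
qed

lemma support_error_prob_le:
  assumes "dnorm alpha \<le> 1" and ball: "ball ths e0 \<subseteq> closure Th" and "0 < e0" "e0 \<le> \<delta>"
    and p_ge: "\<forall>x. x \<noteq> 0 \<longrightarrow> \<bar>x\<bar> < \<delta> \<longrightarrow> \<kappa> * \<bar>x\<bar> powr q \<le> p x"
    and "\<kappa> > 0" "q > 0" "m0 > 0" "m > 0" "R > 0" "0 < eta" "eta \<le> 1" "S \<ge> 0"
    and "(\<integral>\<^sup>+\<omega>. ennreal (norm (\<chi> j. (thetahat \<omega> $ j - ths $ j) / alpha j) powr m) \<partial>M)
      \<le> ennreal S"
    and cT: "cT M H Th ths alpha xi q eta m0 R = ennreal y" "y \<ge> 0"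
  shows "measure M {\<omega>\<in>space M. \<exists>j. ths $ j = 0 \<and> thetahat \<omega> $ j \<noteq> 0}
    \<le> y / \<kappa> powr m0 + S * ((1 / R) powr m + (1 / e0) powr m) * dnorm alpha powr (m * eta)"
proof -
  define \<epsilon> where "\<epsilon> = min e0 (R * dnorm alpha powr (1 - eta))"
  let ?E = "{\<omega>\<in>space M. \<exists>j. ths $ j = 0 \<and> thetahat \<omega> $ j \<noteq> 0}"
  let ?near = "{\<omega>\<in>space M. (\<exists>j. ths $ j = 0 \<and> thetahat \<omega> $ j \<noteq> 0) \<and> norm (thetahat \<omega> - ths) < \<epsilon>}"
  let ?far = "{\<omega>\<in>space M. \<epsilon> \<le> norm (thetahat \<omega> - ths)}"
  have "?near \<union> ?far \<in> sets M" by measurable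
  then have "measure M ?E \<le> measure M (?near \<union> ?far)"
    by (rule finite_measure_mono[rotated]) auto
  also have "\<dots> \<le> measure M ?near + measure M ?far"
    by (rule measure_Un_le) measurable
  finally have split: "measure M ?E \<le> measure M ?near + measure M ?far" .
  have "ball ths \<epsilon> \<subseteq> closure Th"
    using ball by (auto simp: \<epsilon>_def)
  then have "ennreal (\<kappa> powr m0) * emeasure M ?near \<le> ennreal y"
    unfolding cT(1)[symmetric]
    by (rule emeasure_near_support_error_le[OF _ _ _ p_ge]) (use assms in \<open>auto simp: \<epsilon>_def\<close>)
  moreover have "ennreal (\<kappa> powr m0) * emeasure M ?near = ennreal (\<kappa> powr m0 * measure M ?near)"
    by (subst ennreal_mult) (auto simp: emeasure_eq_measure)
  ultimately have "measure M ?near \<le> y / \<kappa> powr m0"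
    using cT(2) \<open>\<kappa> > 0\<close> by (simp add: pos_le_divide_eq mult.commute)
  moreover have "measure M ?far \<le> S * ((1 / R) powr m + (1 / e0) powr m) * dnorm alpha powr (m * eta)"
    unfolding \<epsilon>_def using assms by (intro prob_far_le) auto
  ultimately show ?thesis using split by linarith
qed

lemma support_error_prob_less:
  assumes ball: "ball ths e0 \<subseteq> closure Th" and "0 < e0" "e0 \<le> \<delta>"
    and p_ge: "\<forall>x. x \<noteq> 0 \<longrightarrow> \<bar>x\<bar> < \<delta> \<longrightarrow> \<kappa> * \<bar>x\<bar> powr q \<le> p x"
    and "\<kappa> > 0" "q > 0" "m0 > 0" "m > 0" "R > 0" "0 < eta" "eta \<le> 1" "S \<ge> 0"
    and "(\<integral>\<^sup>+\<omega>. ennreal (norm (\<chi> j. (thetahat \<omega> $ j - ths $ j) / alpha j) powr m) \<partial>M)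
      \<le> ennreal S"
  shows "ennreal (measure M {\<omega>\<in>space M. \<exists>j. ths $ j = 0 \<and> thetahat \<omega> $ j \<noteq> 0})
    < ennreal (1 + S * ((1 / R) powr m + (1 / e0) powr m) + 1 / \<kappa> powr m0)
      * (ennreal (dnorm alpha powr (m * eta)) + cT M H Th ths alpha xi q eta m0 R)"
    (is "ennreal (measure M ?E) < ennreal ?D * (ennreal ?x0 + ?c)")
proof -
  let ?C = "(1 / R) powr m + (1 / e0) powr m"
  have "?C > 0" "\<kappa> powr m0 > 0" using assms by (auto intro: add_pos_pos)
  then have D: "?D \<ge> 1" "?D \<ge> 1 + S * ?C" "?D \<ge> 1 / \<kappa> powr m0" using \<open>S \<ge> 0\<close> by auto
  have "?x0 > 0" using dnorm_pos[of alpha, OF alpha_nonzero] by simp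
  show ?thesis
  proof (cases "?c = \<infinity>")
    case True
    then show ?thesis using D(1) by (simp add: ennreal_mult_top)
  next
    case False
    then obtain y where y: "?c = ennreal y" "y \<ge> 0" by (cases ?c) auto
    have "measure M ?E < ?D * (?x0 + y)"
    proof (cases "dnorm alpha \<le> 1")
      case False
      then have "1 < ?x0" using assms by (intro gr_one_powr) auto
      also have "\<dots> \<le> ?D * ?x0" using D(1) \<open>?x0 > 0\<close> by simp
      also have "\<dots> \<le> ?D * (?x0 + y)" using D(1) y(2) by simp
      finally show ?thesis using prob_le_1[of ?E] by linarith
    next
      case True
      have "y / \<kappa> powr m0 \<le> ?D * y"
        using D y(2) mult_right_mono[of "1 / \<kappa> powr m0" ?D y] by simp
      moreover have "S * ?C * ?x0 < ?D * ?x0"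
        by (rule mult_strict_right_mono) (use D(2) \<open>?x0 > 0\<close> in linarith)+
      moreover have "measure M ?E \<le> y / \<kappa> powr m0 + S * ?C * ?x0"
        by (rule support_error_prob_le[OF True ball _ _ p_ge]) (use assms y in auto)
      ultimately show ?thesis unfolding distrib_left by linarith
    qed
    then have "ennreal (measure M ?E) < ennreal (?D * (?x0 + y))"
      by (simp add: ennreal_less_iff)
    then show ?thesis using y \<open>?x0 > 0\<close> D(1) by (simp add: ennreal_mult ennreal_plus)
  qed
qed

end

theorem theorem5:
  fixes M :: "'w measure"
    and Th :: "(real^'p::finite) set" and ths :: "real^'p"
    and TT :: "real set"
    and H :: "real \<Rightarrow> 'w \<Rightarrow> real^'p \<Rightarrow> real"
    and xi :: "real \<Rightarrow> 'w \<Rightarrow> 'p \<Rightarrow> real"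
    and p :: "real \<Rightarrow> real"
    and thetahat :: "real \<Rightarrow> 'w \<Rightarrow> real^'p"
    and alpha :: "real \<Rightarrow> 'p \<Rightarrow> real"
    and q eta m :: real
  assumes M: "prob_space M"
    and Th: "open Th" "bounded Th" "ths \<in> Th"
    and TT: "TT \<subseteq> {0..}" "\<forall>x. \<exists>T\<in>TT. T > x"
    and H_meas: "\<forall>T\<in>TT. \<forall>\<theta>\<in>closure Th. (\<lambda>\<omega>. H T \<omega> \<theta>) \<in> borel_measurable M"
    and H_cont: "\<forall>T\<in>TT. \<forall>\<omega>\<in>space M. continuous_on (closure Th) (H T \<omega>)"
    and xi_meas: "\<forall>T\<in>TT. \<forall>j. (\<lambda>\<omega>. xi T \<omega> j) \<in> borel_measurable M"
    and xi_pos: "\<forall>T\<in>TT. \<forall>\<omega>\<in>space M. \<forall>j. xi T \<omega> j > 0"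
    and p_nonneg: "\<forall>x. p x \<ge> 0" and p0: "p 0 = 0"
    and th_meas: "\<forall>T\<in>TT. thetahat T \<in> borel_measurable M"
    and th_in: "\<forall>T\<in>TT. \<forall>\<omega>\<in>space M. thetahat T \<omega> \<in> closure Th"
    and th_max: "\<forall>T\<in>TT. \<forall>\<omega>\<in>space M. \<forall>\<theta>\<in>closure Th.
        H T \<omega> \<theta> - (\<Sum>j\<in>UNIV. xi T \<omega> j * p (\<theta> $ j))
        \<le> H T \<omega> (thetahat T \<omega>) - (\<Sum>j\<in>UNIV. xi T \<omega> j * p (thetahat T \<omega> $ j))"
    and alpha_inv: "\<forall>T\<in>TT. \<forall>j. alpha T j \<noteq> 0"
    and alpha_lim: "\<forall>\<epsilon>>0. \<exists>T0. \<forall>T\<in>TT. T \<ge> T0 \<longrightarrow> dnorm (alpha T) < \<epsilon>"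
    and q: "0 < q" "q \<le> 1"
    and eta: "0 < eta" "eta \<le> 1"
    and m: "m > 0"
    and moment: "(SUP T\<in>TT. \<integral>\<^sup>+ \<omega>. ennreal (norm (\<chi> j. (thetahat T \<omega> $ j - ths $ j) / alpha T j) powr m) \<partial>M) < \<infinity>"
    and A5: "\<exists>lam>0. ((\<lambda>x. p x / \<bar>x\<bar> powr q) \<longlongrightarrow> lam) (at 0)"
  shows "\<forall>R>0. \<forall>m0>0. \<exists>D>0. \<forall>T\<in>TT.
     ennreal (measure M {\<omega>\<in>space M. \<exists>j. ths $ j = 0 \<and> thetahat T \<omega> $ j \<noteq> 0})
       < ennreal D * (ennreal (dnorm (alpha T) powr (m * eta))
                      + cT M (H T) Th ths (alpha T) (xi T) q eta m0 R)"
proof (intro allI impI)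
  fix R m0 :: real
  assume "R > 0" "m0 > 0"
  obtain lam where "lam > 0" and lim: "((\<lambda>x. p x / \<bar>x\<bar> powr q) \<longlongrightarrow> lam) (at 0)"
    using A5 by blast
  then obtain \<delta> where "\<delta> > 0" and p_ge: "\<forall>x. x \<noteq> 0 \<longrightarrow> \<bar>x\<bar> < \<delta> \<longrightarrow> lam / 2 * \<bar>x\<bar> powr q \<le> p x"
    using lower_bound_near_0_of_tendsto_div_powr[OF lim, of "lam / 2"] by auto
  obtain r where "r > 0" "ball ths r \<subseteq> Th"
    using Th open_contains_ball by blast
  define e0 where "e0 = min r \<delta>"
  have ball: "ball ths e0 \<subseteq> closure Th"
    using \<open>ball ths r \<subseteq> Th\<close> closure_subset[of Th] subset_ball[of e0 r] by (auto simp: e0_def)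
  let ?moment = "\<lambda>T. \<integral>\<^sup>+ \<omega>. ennreal (norm (\<chi> j. (thetahat T \<omega> $ j - ths $ j) / alpha T j) powr m) \<partial>M"
  define S where "S = enn2real (SUP T\<in>TT. ?moment T)"
  have "(SUP T\<in>TT. ?moment T) = ennreal S"
    using moment unfolding S_def infinity_ennreal_def by (intro ennreal_enn2real[symmetric] less_imp_neq)
  then have moment_S: "?moment T \<le> ennreal S" if "T \<in> TT" for T
    using SUP_upper[OF that, of ?moment] by simp
  have estimator: "penalized_estimator M Th (H T) (xi T) p (thetahat T) (alpha T)" if "T \<in> TT" for T
    by (intro penalized_estimator.intro penalized_estimator_axioms.intro M)
      (use xi_pos alpha_inv p0 th_meas th_in th_max that in auto)
  have "S \<ge> 0" by (simp add: S_def)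
  then have "1 + S * ((1 / R) powr m + (1 / e0) powr m) + 1 / (lam / 2) powr m0 > 0"
    using \<open>lam > 0\<close> by (simp add: add_pos_nonneg)
  then show "\<exists>D>0. \<forall>T\<in>TT.
     ennreal (measure M {\<omega>\<in>space M. \<exists>j. ths $ j = 0 \<and> thetahat T \<omega> $ j \<noteq> 0})
       < ennreal D * (ennreal (dnorm (alpha T) powr (m * eta))
                      + cT M (H T) Th ths (alpha T) (xi T) q eta m0 R)"
    by (intro exI[of _ "1 + S * ((1 / R) powr m + (1 / e0) powr m) + 1 / (lam / 2) powr m0"]
        conjI ballI penalized_estimator.support_error_prob_less[OF estimator ball _ _ p_ge])
      (use \<open>r > 0\<close> \<open>\<delta> > 0\<close> moment_S \<open>S \<ge> 0\<close> \<open>lam > 0\<close> \<open>R > 0\<close> \<open>m0 > 0\<close> q eta m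
        in \<open>auto simp: e0_def\<close>)
qed

end
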